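(* Under the hypotheses below (for SGDA or SEG), for all $x^*\in X^*$ there exist constants $c_1\in(0,1)$, $c_2\in(0,\infty)$ such that, with $V(x,x^* )=\|x-x^*\|^2+1$ (a function $\mathbb{R}^d\to[1,\infty)$), $$\mathbb{E}\big[V(X_{t+1},x^* )\mid\mathcal{F}_t\big]\le c_1 V(X_t,x^* )+c_2\quad\text{for all }t\ge0.$$ Hypotheses: $F:\mathbb{R}^d\to\mathbb{R}^d$, $X^*=\{x:F(x)=0\}$ nonempty with some $x^*\in X^*$, $\|x^*\|\le R$; there are $\lambda\ge0,\mu>0$ with $\langle F(x),x-x^*\rangle\ge\mu\|x-x^*\|^2-\lambda$ for all $x$ and some $x^*\in X^*$; the stochastic oracle assumptions of the context hold; and either (i) SGDA $X_{t+1}=X_t-\gamma(F(X_t)+U_t(X_t))$ with $\|F(x)\|\le G(1+\|x\|)$ for all $x$ and $0<\gamma<\mu/G^2$, or (ii) SEG $X_{t+1/2}=X_t-\gamma(F(X_t)+U_t(X_t))$, $X_{t+1}=X_t-\alpha\gamma(F(X_{t+1/2})+U_{t+1/2}(X_{t+1/2}))$ with $F$ $L$-Lipschitz, $0<\gamma<\frac1{2\mu+\sqrt3 L}$, $\alpha\in(0,1)$.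
   Context: Stochastic oracle: the noise fields $(U_t(\cdot))$ (and $U_{t+1/2}$ for SEG) are i.i.d. random fields; there is a filtration $(\mathcal{F}_t)$ (history of the iterates, $\mathcal{F}_{t+1/2}=\mathcal{F}_t$) with $U_t(X_t)$ $\mathcal{F}_{t+1}$-measurable but not $\mathcal{F}_t$-measurable, $\mathbb{E}[U_t(x)\mid\mathcal{F}_t]=0$ and $\mathbb{E}[\|U_t(x)\|^2\mid\mathcal{F}_t]\le\sigma^2$ for all $x$, for some $\sigma>0$. *)

theory Defs
  imports "HOL-Analysis.Analysis" "HOL-Probability.Probability"
begin

definition lyapV :: "'a::real_normed_vector \<Rightarrow> 'a \<Rightarrow> real" where
  "lyapV x xs = (norm (x - xs))\<^sup>2 + 1"

definition oracle_noise ::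
  "'w measure \<Rightarrow> 'w measure \<Rightarrow> ('w \<Rightarrow> 'a::euclidean_space \<Rightarrow> 'a) \<Rightarrow> real \<Rightarrow> bool" where
  "oracle_noise M G W \<sigma> \<longleftrightarrow>
     (\<forall>Y \<in> borel_measurable G.
        (\<lambda>\<omega>. W \<omega> (Y \<omega>)) \<in> borel_measurable M \<and>
        integrable M (\<lambda>\<omega>. W \<omega> (Y \<omega>)) \<and>
        (\<forall>b\<in>Basis. AE \<omega> in M. real_cond_exp M G (\<lambda>\<omega>. W \<omega> (Y \<omega>) \<bullet> b) \<omega> = 0) \<and>
        (AE \<omega> in M. nn_cond_exp M G (\<lambda>\<omega>. ennreal ((norm (W \<omega> (Y \<omega>)))\<^sup>2)) \<omega>
                        \<le> ennreal (\<sigma>\<^sup>2)))"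

end

theory Submission
  imports Defs
begin

text \<open>For SGDA, \<open>X (Suc t) - x\<^sup>*\<close> is a deterministic update of \<open>X t - x\<^sup>*\<close> minus \<open>\<gamma>\<close> times the
  oracle noise. Expanding the square, the noise enters linearly with an \<open>\<F> t\<close>-measurable
  coefficient, which vanishes under conditioning, and quadratically, which the variance bound
  \<open>\<sigma>\<^sup>2\<close> controls. The deterministic update is an affine contraction of \<open>\<parallel>x - x\<^sup>*\<parallel>\<^sup>2\<close>: the
  monotonicity hypothesis, transported from the given zero to \<open>x\<^sup>*\<close> at the price of a smaller \<open>\<mu>\<close>
  and a larger \<open>\<lambda>\<close>, gives this when \<open>\<gamma> G\<^sup>2 < \<mu>\<close>.
  For SEG, conditioning on the \<sigma>-algebra of the half step removes the second noise term, and the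
  first one only moves the extrapolated point, which changes \<open>F\<close> there by at most \<open>\<gamma> L\<close> times
  the noise. The noiseless extragradient step contracts because, for \<open>\<gamma> L \<le> 1\<close>, the value of
  \<open>F\<close> at the extrapolated point has a large inner product with \<open>F x\<close>.\<close>

section \<open>Conditional expectations of noisy quadratic forms\<close>

definition centred_noise ::
  "'w measure \<Rightarrow> 'w measure \<Rightarrow> ('w \<Rightarrow> 'a::euclidean_space) \<Rightarrow> real \<Rightarrow> bool" where
  "centred_noise M G V \<sigma> \<longleftrightarrow>
     V \<in> borel_measurable M \<and> integrable M V \<and>
     (\<forall>b\<in>Basis. AE \<omega> in M. real_cond_exp M G (\<lambda>\<omega>. V \<omega> \<bullet> b) \<omega> = 0) \<and>
     (AE \<omega> in M. nn_cond_exp M G (\<lambda>\<omega>. ennreal ((norm (V \<omega>))\<^sup>2)) \<omega> \<le> ennreal (\<sigma>\<^sup>2))"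

lemma oracle_noise_centred_noise:
  assumes "oracle_noise M G W \<sigma>" and "Y \<in> borel_measurable G"
  shows "centred_noise M G (\<lambda>\<omega>. W \<omega> (Y \<omega>)) \<sigma>"
  using assms unfolding oracle_noise_def centred_noise_def by blast

context sigma_finite_subalgebra
begin

lemma nn_cond_exp_eq_real_cond_exp:
  assumes int: "integrable M g" and nonneg: "\<And>x. x \<in> space M \<Longrightarrow> 0 \<le> g x"
  shows "AE x in M. nn_cond_exp M F (\<lambda>x. ennreal (g x)) x = ennreal (real_cond_exp M F g x)"
proof -
  have [measurable]: "g \<in> borel_measurable M" using int by auto
  have pos: "AE x in M. 0 \<le> real_cond_exp M F g x" by (rule real_cond_exp_pos) (use nonneg in auto)
  have "AE x in M. ennreal (real_cond_exp M F g x) = nn_cond_exp M F (\<lambda>x. ennreal (g x)) x"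
  proof (rule nn_cond_exp_charact)
    fix A assume [measurable]: "A \<in> sets F"
    then have [measurable]: "A \<in> sets M" using subalg by (meson subalgebra_def subsetD)
    have iA: "integrable M (\<lambda>x. indicator A x * g x)"
      using integrable_real_mult_indicator[OF _ int] by (simp add: mult.commute)
    have "(\<integral>\<^sup>+ x \<in> A. ennreal (g x) \<partial>M) = (\<integral>\<^sup>+ x. ennreal (indicator A x * g x) \<partial>M)"
      by (intro nn_integral_cong) (auto simp: indicator_def)
    also have "\<dots> = ennreal (\<integral> x. indicator A x * g x \<partial>M)"
      by (intro nn_integral_eq_integral iA AE_I2) (auto simp: nonneg indicator_def)
    also have "(\<integral> x. indicator A x * g x \<partial>M) = (\<integral> x. indicator A x * real_cond_exp M F g x \<partial>M)"
      by (rule real_cond_exp_intg(2)[symmetric]) (auto intro: iA)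
    also have "ennreal \<dots> = (\<integral>\<^sup>+ x. ennreal (indicator A x * real_cond_exp M F g x) \<partial>M)"
    proof (rule nn_integral_eq_integral[symmetric])
      show "integrable M (\<lambda>x. indicator A x * real_cond_exp M F g x)"
        by (rule real_cond_exp_intg(1)) (auto intro: iA)
      show "AE x in M. 0 \<le> indicator A x * real_cond_exp M F g x"
        using pos by eventually_elim (auto simp: indicator_def)
    qed
    also have "\<dots> = (\<integral>\<^sup>+ x \<in> A. ennreal (real_cond_exp M F g x) \<partial>M)"
      by (intro nn_integral_cong) (auto simp: indicator_def)
    finally show "(\<integral>\<^sup>+ x \<in> A. ennreal (g x) \<partial>M) = (\<integral>\<^sup>+ x \<in> A. ennreal (real_cond_exp M F g x) \<partial>M)" .
  qed auto
  then show ?thesis by auto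
qed

lemma
  assumes V: "centred_noise M F V \<sigma>" and D [measurable]: "D \<in> borel_measurable F"
    and D_bound: "\<And>x. norm (D x) \<le> C"
  shows integrable_inner_centred: "integrable M (\<lambda>x. D x \<bullet> V x)"
    and real_cond_exp_inner_centred_eq_0: "AE x in M. real_cond_exp M F (\<lambda>x. D x \<bullet> V x) x = 0"
proof -
  have [measurable]: "V \<in> borel_measurable M" and V_int: "integrable M V"
    and V_centred: "\<forall>b\<in>Basis. AE x in M. real_cond_exp M F (\<lambda>x. V x \<bullet> b) x = 0"
    using V unfolding centred_noise_def by auto
  have [measurable]: "D \<in> borel_measurable M" by (rule measurable_from_subalg[OF subalg D])
  have coord_int: "integrable M (\<lambda>x. (D x \<bullet> b) * (V x \<bullet> b))" if "b \<in> Basis" for b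
  proof (rule Bochner_Integration.integrable_bound[OF integrable_mult_right[OF integrable_norm[OF V_int], of C]])
    show "AE x in M. norm ((D x \<bullet> b) * (V x \<bullet> b)) \<le> norm (C * norm (V x))"
    proof (intro AE_I2)
      fix x
      have "0 \<le> C" by (rule order_trans[OF norm_ge_zero D_bound])
      moreover have "\<bar>D x \<bullet> b\<bar> \<le> C" by (rule order_trans[OF Basis_le_norm[OF that] D_bound])
      ultimately have "\<bar>D x \<bullet> b\<bar> * \<bar>V x \<bullet> b\<bar> \<le> C * norm (V x)"
        using Basis_le_norm[OF that] by (intro mult_mono) auto
      then show "norm ((D x \<bullet> b) * (V x \<bullet> b)) \<le> norm (C * norm (V x))"
        using \<open>0 \<le> C\<close> by (simp add: abs_mult)
    qed
  qed measurable
  have coords: "(\<lambda>x. D x \<bullet> V x) = (\<lambda>x. \<Sum>b\<in>Basis. (D x \<bullet> b) * (V x \<bullet> b))"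
    by (rule ext) (rule euclidean_inner)
  show "integrable M (\<lambda>x. D x \<bullet> V x)"
    unfolding coords by (rule Bochner_Integration.integrable_sum) (rule coord_int)
  define f where "f b = (\<lambda>x. if b \<in> Basis then (D x \<bullet> b) * (V x \<bullet> b) else 0)" for b
  have f_int: "integrable M (f b)" for b
    using coord_int[of b] by (cases "b \<in> Basis") (simp_all add: f_def)
  have "AE x in M. real_cond_exp M F (\<lambda>x. \<Sum>b\<in>Basis. f b x) x = (\<Sum>b\<in>Basis. real_cond_exp M F (f b) x)"
    by (rule real_cond_exp_sum) (rule f_int)
  moreover have "AE x in M. \<forall>b\<in>Basis. real_cond_exp M F (f b) x = (D x \<bullet> b) * real_cond_exp M F (\<lambda>x. V x \<bullet> b) x"
  proof (rule eventually_ball_finite[OF finite_Basis], intro ballI)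
    fix b :: 'b assume b: "b \<in> Basis"
    then have "f b = (\<lambda>x. (D x \<bullet> b) * (V x \<bullet> b))" by (auto simp: f_def)
    then show "AE x in M. real_cond_exp M F (f b) x = (D x \<bullet> b) * real_cond_exp M F (\<lambda>x. V x \<bullet> b) x"
      using coord_int[OF b] by (auto intro: real_cond_exp_mult)
  qed
  moreover have "AE x in M. \<forall>b\<in>Basis. real_cond_exp M F (\<lambda>x. V x \<bullet> b) x = 0"
    using V_centred by (rule eventually_ball_finite[OF finite_Basis])
  ultimately show "AE x in M. real_cond_exp M F (\<lambda>x. D x \<bullet> V x) x = 0"
    unfolding coords by eventually_elim (simp add: f_def)
qed


lemma nn_cond_exp_le_of_nested_le:
  assumes "subalgebra M H" and "subalgebra H F"
    and [measurable]: "f \<in> borel_measurable M" "g \<in> borel_measurable M"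
    and le: "AE x in M. nn_cond_exp M H f x \<le> g x"
  shows "AE x in M. nn_cond_exp M F f x \<le> nn_cond_exp M F g x"
proof -
  have "AE x in M. nn_cond_exp M F f x = nn_cond_exp M F (nn_cond_exp M H f) x"
    using assms(1,2) by (rule nn_cond_exp_nested_subalg) measurable
  moreover have "AE x in M. nn_cond_exp M F (nn_cond_exp M H f) x \<le> nn_cond_exp M F g x"
    using le by (rule nn_cond_exp_mono) measurable
  ultimately show ?thesis by eventually_elim simp
qed
end

context finite_measure_subalgebra
begin

lemma integrable_of_nn_cond_exp_le:
  assumes [measurable]: "g \<in> borel_measurable M" and nonneg: "\<And>x. x \<in> space M \<Longrightarrow> 0 \<le> g x"
    and bound: "AE x in M. nn_cond_exp M F (\<lambda>x. ennreal (g x)) x \<le> ennreal c"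
  shows "integrable M g"
proof (rule integrableI_nonneg)
  have "(\<integral>\<^sup>+ x. ennreal (g x) \<partial>M) = (\<integral>\<^sup>+ x. 1 * nn_cond_exp M F (\<lambda>x. ennreal (g x)) x \<partial>M)"
    using nn_cond_exp_intg[of "\<lambda>_. 1" "\<lambda>x. ennreal (g x)"] by simp
  also have "\<dots> \<le> (\<integral>\<^sup>+ x. ennreal c \<partial>M)"
    using bound by (intro nn_integral_mono_AE) auto
  also have "\<dots> < \<infinity>" by (simp add: ennreal_mult_less_top emeasure_eq_measure)
  finally show "(\<integral>\<^sup>+ x. ennreal (g x) \<partial>M) < \<infinity>" .
qed (use nonneg in auto)

lemma real_cond_exp_le_of_nn_cond_exp_le:
  assumes [measurable]: "g \<in> borel_measurable M" and nonneg: "\<And>x. x \<in> space M \<Longrightarrow> 0 \<le> g x"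
    and bound: "AE x in M. nn_cond_exp M F (\<lambda>x. ennreal (g x)) x \<le> ennreal c" and "0 \<le> c"
  shows "AE x in M. real_cond_exp M F g x \<le> c"
proof -
  have "integrable M g" using integrable_of_nn_cond_exp_le[OF _ nonneg bound] by simp
  then have "AE x in M. nn_cond_exp M F (\<lambda>x. ennreal (g x)) x = ennreal (real_cond_exp M F g x)"
    using nonneg by (rule nn_cond_exp_eq_real_cond_exp)
  then show ?thesis using bound by eventually_elim (use \<open>0 \<le> c\<close> in \<open>simp add: ennreal_le_iff\<close>)
qed

lemma
  assumes V: "centred_noise M F V \<sigma>"
    and [measurable]: "P \<in> borel_measurable F" "D \<in> borel_measurable F" "k \<in> borel_measurable F"
    and P_bound: "\<And>x. \<bar>P x\<bar> \<le> C" and D_bound: "\<And>x. norm (D x) \<le> C"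
    and k_nonneg: "\<And>x. 0 \<le> k x" and k_bound: "\<And>x. k x \<le> C"
  shows integrable_quadratic_noise: "integrable M (\<lambda>x. P x + D x \<bullet> V x + k x * (norm (V x))\<^sup>2)"
    and real_cond_exp_quadratic_noise_le:
      "AE x in M. real_cond_exp M F (\<lambda>x. P x + D x \<bullet> V x + k x * (norm (V x))\<^sup>2) x
         \<le> P x + k x * \<sigma>\<^sup>2"
proof -
  have [measurable]: "V \<in> borel_measurable M"
    and V2_cond: "AE x in M. nn_cond_exp M F (\<lambda>x. ennreal ((norm (V x))\<^sup>2)) x \<le> ennreal (\<sigma>\<^sup>2)"
    using V unfolding centred_noise_def by auto
  have [measurable]: "P \<in> borel_measurable M" "k \<in> borel_measurable M"
    by (auto intro: measurable_from_subalg[OF subalg])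
  have V2_int: "integrable M (\<lambda>x. (norm (V x))\<^sup>2)"
    by (rule integrable_of_nn_cond_exp_le[OF _ _ V2_cond]) auto
  have P_int: "integrable M P"
    by (rule integrable_const_bound[where B = C]) (auto simp: P_bound)
  have DV_int: "integrable M (\<lambda>x. D x \<bullet> V x)"
    by (rule integrable_inner_centred[OF V _ D_bound]) measurable
  have kV_int: "integrable M (\<lambda>x. k x * (norm (V x))\<^sup>2)"
  proof (rule Bochner_Integration.integrable_bound[OF integrable_mult_right[OF V2_int, of C]])
    show "AE x in M. norm (k x * (norm (V x))\<^sup>2) \<le> norm (C * (norm (V x))\<^sup>2)"
      using k_nonneg k_bound order_trans[OF k_nonneg k_bound]
      by (intro AE_I2) (simp add: abs_mult mult_right_mono)
  qed measurable
  show "integrable M (\<lambda>x. P x + D x \<bullet> V x + k x * (norm (V x))\<^sup>2)"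
    using P_int DV_int kV_int by (intro Bochner_Integration.integrable_add)
  have "AE x in M. real_cond_exp M F (\<lambda>x. P x + D x \<bullet> V x + k x * (norm (V x))\<^sup>2) x
      = real_cond_exp M F (\<lambda>x. P x + D x \<bullet> V x) x + real_cond_exp M F (\<lambda>x. k x * (norm (V x))\<^sup>2) x"
    using P_int DV_int kV_int by (intro real_cond_exp_add Bochner_Integration.integrable_add)
  moreover have "AE x in M. real_cond_exp M F (\<lambda>x. P x + D x \<bullet> V x) x
      = real_cond_exp M F P x + real_cond_exp M F (\<lambda>x. D x \<bullet> V x) x"
    using P_int DV_int by (rule real_cond_exp_add)
  moreover have "AE x in M. real_cond_exp M F P x = P x"
    using P_int by (rule real_cond_exp_F_meas) measurable
  moreover have "AE x in M. real_cond_exp M F (\<lambda>x. D x \<bullet> V x) x = 0"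
    by (rule real_cond_exp_inner_centred_eq_0[OF V _ D_bound]) measurable
  moreover have "AE x in M. real_cond_exp M F (\<lambda>x. k x * (norm (V x))\<^sup>2) x
      = k x * real_cond_exp M F (\<lambda>x. (norm (V x))\<^sup>2) x"
    using kV_int by (intro real_cond_exp_mult) measurable
  moreover have "AE x in M. real_cond_exp M F (\<lambda>x. (norm (V x))\<^sup>2) x \<le> \<sigma>\<^sup>2"
    by (rule real_cond_exp_le_of_nn_cond_exp_le[OF _ _ V2_cond]) auto
  ultimately show "AE x in M. real_cond_exp M F (\<lambda>x. P x + D x \<bullet> V x + k x * (norm (V x))\<^sup>2) x
      \<le> P x + k x * \<sigma>\<^sup>2"
    by eventually_elim (simp add: k_nonneg mult_left_mono)
qed

lemma nn_cond_exp_quadratic_noise_le: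
  assumes V: "centred_noise M F V \<sigma>"
    and [measurable]: "P \<in> borel_measurable F" "D \<in> borel_measurable F" "Z \<in> borel_measurable M"
    and K: "0 \<le> K"
    and Z_nonneg: "\<And>x. x \<in> space M \<Longrightarrow> 0 \<le> Z x"
    and Z_le: "\<And>x. x \<in> space M \<Longrightarrow> Z x \<le> P x + D x \<bullet> V x + K * (norm (V x))\<^sup>2"
  shows "AE x in M. nn_cond_exp M F (\<lambda>x. ennreal (Z x)) x \<le> ennreal (P x + K * \<sigma>\<^sup>2)"
proof -
  define R where "R x = P x + D x \<bullet> V x + K * (norm (V x))\<^sup>2" for x
  \<comment> \<open>\<open>P\<close> and \<open>D\<close> need not be integrable: the positive \<open>F\<close>-measurable weight \<open>w\<close> makes
    every term integrable, and it can be pulled out of the nonnegative conditional expectation.\<close>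
  define w where "w x = 1 / (1 + \<bar>P x\<bar> + norm (D x))" for x
  have [measurable]: "V \<in> borel_measurable M" using V unfolding centred_noise_def by auto
  have [measurable]: "P \<in> borel_measurable M" "D \<in> borel_measurable M"
    by (auto intro: measurable_from_subalg[OF subalg])
  have [measurable]: "w \<in> borel_measurable F" unfolding w_def by measurable
  have [measurable]: "R \<in> borel_measurable M" unfolding R_def by measurable
  have w_pos: "0 < w x" for x unfolding w_def by (simp add: add_pos_nonneg)
  have w_P: "\<bar>w x * P x\<bar> \<le> 1" and w_D: "norm (w x *\<^sub>R D x) \<le> 1" and w_le_1: "w x \<le> 1" for x
    using w_pos[of x] by (auto simp: w_def abs_mult field_simps)
  have wR: "w x * R x = w x * P x + (w x *\<^sub>R D x) \<bullet> V x + w x * K * (norm (V x))\<^sup>2" for x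
    by (simp add: R_def algebra_simps)
  have wR_nonneg: "0 \<le> w x * R x" if "x \<in> space M" for x
    using Z_nonneg[OF that] Z_le[OF that] w_pos[of x] by (simp add: R_def)
  have bounds: "\<bar>w x * P x\<bar> \<le> max 1 K" "norm (w x *\<^sub>R D x) \<le> max 1 K"
    "0 \<le> w x * K" "w x * K \<le> max 1 K" for x
    using w_P[of x] w_D[of x] w_le_1[of x] w_pos[of x] K
    by (auto simp: mult_left_le_one_le less_imp_le intro: max.coboundedI1 max.coboundedI2)
  have wR_int: "integrable M (\<lambda>x. w x * R x)"
    unfolding wR by (rule integrable_quadratic_noise[OF V _ _ _ bounds]) measurable
  have wR_cond: "AE x in M. real_cond_exp M F (\<lambda>x. w x * R x) x \<le> w x * P x + w x * K * \<sigma>\<^sup>2"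
    unfolding wR by (rule real_cond_exp_quadratic_noise_le[OF V _ _ _ bounds]) measurable
  have "AE x in M. nn_cond_exp M F (\<lambda>x. ennreal (Z x)) x \<le> nn_cond_exp M F (\<lambda>x. ennreal (R x)) x"
    using Z_le by (intro nn_cond_exp_mono AE_I2 ennreal_leI) (auto simp: R_def)
  moreover have "AE x in M. ennreal (w x) * nn_cond_exp M F (\<lambda>x. ennreal (R x)) x
      = nn_cond_exp M F (\<lambda>x. ennreal (w x) * ennreal (R x)) x"
    by (rule nn_cond_exp_prod) measurable
  moreover have "AE x in M. nn_cond_exp M F (\<lambda>x. ennreal (w x) * ennreal (R x)) x
      = nn_cond_exp M F (\<lambda>x. ennreal (w x * R x)) x"
    using w_pos by (intro nn_cond_exp_cong AE_I2) (auto simp: ennreal_mult' less_imp_le)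
  moreover have "AE x in M. nn_cond_exp M F (\<lambda>x. ennreal (w x * R x)) x
      = ennreal (real_cond_exp M F (\<lambda>x. w x * R x) x)"
    using wR_int wR_nonneg by (rule nn_cond_exp_eq_real_cond_exp)
  ultimately show ?thesis
    using wR_cond
  proof eventually_elim
    case (elim x)
    have "ennreal (w x) * nn_cond_exp M F (\<lambda>x. ennreal (Z x)) x
        \<le> ennreal (w x) * nn_cond_exp M F (\<lambda>x. ennreal (R x)) x"
      using elim(1) by (rule mult_left_mono) simp
    also have "\<dots> = ennreal (real_cond_exp M F (\<lambda>x. w x * R x) x)" using elim(2-4) by simp
    also have "\<dots> \<le> ennreal (w x * (P x + K * \<sigma>\<^sup>2))"
      using elim(5) by (intro ennreal_leI) (simp add: algebra_simps)
    also have "\<dots> = ennreal (w x) * ennreal (P x + K * \<sigma>\<^sup>2)"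
      using w_pos[of x] by (simp add: ennreal_mult')
    finally show ?case using w_pos[of x] by (subst (asm) ennreal_mult_le_mult_iff) auto
  qed
qed

end

section \<open>Deterministic one-step estimates\<close>

definition quasi_strongly_monotone :: "('a::real_inner \<Rightarrow> 'a) \<Rightarrow> 'a \<Rightarrow> real \<Rightarrow> real \<Rightarrow> bool" where
  "quasi_strongly_monotone F x0 \<mu> l \<longleftrightarrow> (\<forall>x. inner (F x) (x - x0) \<ge> \<mu> * (norm (x - x0))\<^sup>2 - l)"

lemma mult_le_Young:
  fixes c r \<epsilon> :: real
  assumes "0 < \<epsilon>"
  shows "c * r \<le> \<epsilon> * r\<^sup>2 + c\<^sup>2 / (4 * \<epsilon>)"
proof -
  have "\<epsilon> * r\<^sup>2 + c\<^sup>2 / (4 * \<epsilon>) - c * r = (2 * \<epsilon> * r - c)\<^sup>2 / (4 * \<epsilon>)"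
    using assms by (simp add: field_simps power2_eq_square)
  also have "\<dots> \<ge> 0" using assms by simp
  finally show ?thesis by simp
qed

lemma norm_add_power2_le:
  fixes v w :: "'a::real_normed_vector"
  assumes "0 < d"
  shows "(norm (v + w))\<^sup>2 \<le> (1 + d) * (norm v)\<^sup>2 + (1 + 1 / d) * (norm w)\<^sup>2"
proof -
  have "(norm (v + w))\<^sup>2 \<le> (norm v + norm w)\<^sup>2"
    by (intro power_mono norm_triangle_ineq) auto
  also have "\<dots> = (norm v)\<^sup>2 + (2 * norm w) * norm v + (norm w)\<^sup>2"
    by (simp add: power2_eq_square algebra_simps)
  also have "(2 * norm w) * norm v \<le> d * (norm v)\<^sup>2 + (2 * norm w)\<^sup>2 / (4 * d)"
    using assms by (rule mult_le_Young)
  finally show ?thesis using assms by (simp add: field_simps power2_eq_square)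
qed

lemma norm_diff_scaleR_power2:
  fixes v u :: "'a::real_inner"
  shows "(norm (v - c *\<^sub>R u))\<^sup>2 = (norm v)\<^sup>2 - 2 * c * inner v u + c\<^sup>2 * (norm u)\<^sup>2"
  by (simp only: power2_norm_eq_inner)
    (simp add: inner_diff_left inner_diff_right inner_commute algebra_simps power2_eq_square)

lemma quasi_strongly_monotone_shift:
  fixes F :: "'a::real_inner \<Rightarrow> 'a"
  assumes mono: "quasi_strongly_monotone F x0 \<mu> l"
    and growth: "\<And>x. norm (F x) \<le> A + B * norm (x - x1)"
    and "0 \<le> \<mu>" "0 \<le> B" "0 < \<epsilon>"
  shows "quasi_strongly_monotone F x1 (\<mu> - \<epsilon>)
           (l + A * norm (x1 - x0) + (2 * \<mu> + B)\<^sup>2 * (norm (x1 - x0))\<^sup>2 / (4 * \<epsilon>))"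
  unfolding quasi_strongly_monotone_def
proof
  fix x
  define b e where "b = x - x1" and "e = x1 - x0"
  have "x - x0 = b + e" by (simp add: b_def e_def)
  then have "\<mu> * (norm (b + e))\<^sup>2 - l \<le> inner (F x) b + inner (F x) e"
    using mono unfolding quasi_strongly_monotone_def by (metis inner_add_right)
  moreover have "(norm b)\<^sup>2 - 2 * (norm b * norm e) \<le> (norm (b + e))\<^sup>2"
  proof -
    have "(norm (b + e))\<^sup>2 = (norm b)\<^sup>2 + 2 * inner b e + (norm e)\<^sup>2"
      by (simp only: power2_norm_eq_inner) (simp add: inner_add_left inner_add_right inner_commute)
    moreover have "- (norm b * norm e) \<le> inner b e"
      using Cauchy_Schwarz_ineq2[of b e] by (simp add: abs_le_iff)
    ultimately show ?thesis using zero_le_power2[of "norm e"] by linarith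
  qed
  then have "\<mu> * ((norm b)\<^sup>2 - 2 * (norm b * norm e)) \<le> \<mu> * (norm (b + e))\<^sup>2"
    using \<open>0 \<le> \<mu>\<close> by (rule mult_left_mono)
  then have "\<mu> * (norm b)\<^sup>2 - 2 * \<mu> * (norm b * norm e) \<le> \<mu> * (norm (b + e))\<^sup>2"
    by (simp add: algebra_simps)
  moreover have "inner (F x) e \<le> A * norm e + B * (norm b * norm e)"
    using norm_cauchy_schwarz[of "F x" e] mult_right_mono[OF growth[of x], of "norm e"]
    by (simp add: b_def algebra_simps)
  moreover have "2 * \<mu> * (norm b * norm e) + B * (norm b * norm e)
      \<le> \<epsilon> * (norm b)\<^sup>2 + (2 * \<mu> + B)\<^sup>2 * (norm e)\<^sup>2 / (4 * \<epsilon>)"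
  proof -
    have "((2 * \<mu> + B) * norm e) * norm b \<le> \<epsilon> * (norm b)\<^sup>2 + (2 * \<mu> + B)\<^sup>2 * (norm e)\<^sup>2 / (4 * \<epsilon>)"
      using mult_le_Young[OF \<open>0 < \<epsilon>\<close>, of "(2 * \<mu> + B) * norm e" "norm b"]
      by (simp only: power_mult_distrib)
    then show ?thesis by (simp add: algebra_simps)
  qed
  ultimately have "(\<mu> - \<epsilon>) * (norm b)\<^sup>2 - (l + A * norm e + (2 * \<mu> + B)\<^sup>2 * (norm e)\<^sup>2 / (4 * \<epsilon>))
      \<le> inner (F x) b"
    by (simp add: left_diff_distrib)
  then show "(\<mu> - \<epsilon>) * (norm (x - x1))\<^sup>2
      - (l + A * norm (x1 - x0) + (2 * \<mu> + B)\<^sup>2 * (norm (x1 - x0))\<^sup>2 / (4 * \<epsilon>))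
      \<le> inner (F x) (x - x1)"
    by (simp add: b_def e_def)
qed

lemma sgda_step_norm_power2_le:
  fixes b f u :: "'a::real_inner"
  assumes mono: "m * (norm b)\<^sup>2 - l \<le> inner f b" and growth: "norm f \<le> A + B * norm b"
    and "0 \<le> A" "0 \<le> B" "0 < \<gamma>"
  shows "(norm (b - \<gamma> *\<^sub>R (f + u)))\<^sup>2
         \<le> (1 - 2 * \<gamma> * m + 25/16 * \<gamma>\<^sup>2 * B\<^sup>2) * (norm b)\<^sup>2 + 2 * \<gamma> * l + 25/4 * \<gamma>\<^sup>2 * A\<^sup>2
           - 2 * \<gamma> * inner b u + 5 * \<gamma>\<^sup>2 * (norm u)\<^sup>2"
proof -
  \<comment> \<open>The weight \<open>5/4\<close> in both splittings keeps \<open>25/16 * \<gamma>\<^sup>2 * B\<^sup>2\<close> below \<open>2 * \<gamma> * m\<close>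
    whenever \<open>\<gamma> * B\<^sup>2 < m\<close>.\<close>
  have "(norm (f + u))\<^sup>2 \<le> 5/4 * (norm f)\<^sup>2 + 5 * (norm u)\<^sup>2"
    using norm_add_power2_le[of "1/4" f u] by simp
  moreover have "(norm f)\<^sup>2 \<le> 5/4 * (B * norm b)\<^sup>2 + 5 * A\<^sup>2"
  proof -
    have "(norm f)\<^sup>2 \<le> (B * norm b + A)\<^sup>2"
      using growth by (intro power_mono) (auto simp: add.commute)
    also have "\<dots> \<le> 5/4 * (B * norm b)\<^sup>2 + 5 * A\<^sup>2"
      using norm_add_power2_le[of "1/4" "B * norm b" A] \<open>0 \<le> A\<close> \<open>0 \<le> B\<close> by simp
    finally show ?thesis .
  qed
  ultimately have "\<gamma>\<^sup>2 * (norm (f + u))\<^sup>2 \<le> \<gamma>\<^sup>2 * (25/16 * B\<^sup>2 * (norm b)\<^sup>2 + 25/4 * A\<^sup>2 + 5 * (norm u)\<^sup>2)"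
    by (intro mult_left_mono) (auto simp: power_mult_distrib)
  moreover have "2 * \<gamma> * (m * (norm b)\<^sup>2 - l) \<le> 2 * \<gamma> * inner f b"
    using mono \<open>0 < \<gamma>\<close> by simp
  ultimately show ?thesis
    unfolding norm_diff_scaleR_power2 by (simp add: inner_add_right inner_commute algebra_simps)
qed

lemma extrapolation_norm_power2_le:
  fixes F :: "'a::real_inner \<Rightarrow> 'a"
  assumes lip: "L-lipschitz_on UNIV F" and "0 \<le> \<gamma>" "\<gamma> * L \<le> 1"
  shows "(norm (F (x - \<gamma> *\<^sub>R F x)))\<^sup>2 \<le> 2 * inner (F (x - \<gamma> *\<^sub>R F x)) (F x)"
proof -
  define y where "y = x - \<gamma> *\<^sub>R F x"
  have "0 \<le> L" using lip by (simp add: lipschitz_on_def)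
  have "norm (F y - F x) \<le> L * norm (y - x)"
    using lip by (simp add: lipschitz_on_def dist_norm)
  also have "\<dots> = (\<gamma> * L) * norm (F x)" using \<open>0 \<le> \<gamma>\<close> by (simp add: y_def)
  also have "\<dots> \<le> norm (F x)"
    using \<open>\<gamma> * L \<le> 1\<close> \<open>0 \<le> L\<close> \<open>0 \<le> \<gamma>\<close> by (intro mult_left_le_one_le) auto
  finally have "(norm (F y - F x))\<^sup>2 \<le> (norm (F x))\<^sup>2" by (simp add: power_mono)
  moreover have "(norm (F y - F x))\<^sup>2 = (norm (F y))\<^sup>2 + (norm (F x))\<^sup>2 - 2 * inner (F y) (F x)"
    by (simp only: power2_norm_eq_inner) (simp add: inner_diff_left inner_diff_right inner_commute)
  ultimately show ?thesis unfolding y_def[symmetric] by linarith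
qed

lemma extragradient_norm_power2_le:
  fixes F :: "'a::real_inner \<Rightarrow> 'a"
  assumes mono: "quasi_strongly_monotone F xs m l" and lip: "L-lipschitz_on UNIV F"
    and zero: "F xs = 0"
    and "0 \<le> m" "0 < \<gamma>" "\<gamma> * L \<le> 1" "0 < \<alpha>" "\<alpha> \<le> 1"
  shows "(norm (x - xs - (\<alpha> * \<gamma>) *\<^sub>R F (x - \<gamma> *\<^sub>R F x)))\<^sup>2
           \<le> (1 - 2 * \<alpha> * \<gamma> * m * (1 - \<gamma> * L)\<^sup>2) * (norm (x - xs))\<^sup>2 + 2 * \<alpha> * \<gamma> * l"
proof -
  define b y where "b = x - xs" and "y = x - \<gamma> *\<^sub>R F x"
  have b_split: "b = (y - xs) + \<gamma> *\<^sub>R F x" by (simp add: b_def y_def)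
  have "\<gamma> * ((norm (F y))\<^sup>2 / 2) \<le> \<gamma> * inner (F y) (F x)"
    using extrapolation_norm_power2_le[OF lip _ \<open>\<gamma> * L \<le> 1\<close>, of x] \<open>0 < \<gamma>\<close>
    by (intro mult_left_mono) (auto simp: y_def)
  moreover have "(1 - \<gamma> * L) * norm b \<le> norm (y - xs)"
  proof -
    have "norm (\<gamma> *\<^sub>R F x) \<le> \<gamma> * (L * norm b)"
      using lipschitz_onD[OF lip, of x xs] zero \<open>0 < \<gamma>\<close> by (simp add: b_def dist_norm mult_left_mono)
    moreover have "norm b - norm (\<gamma> *\<^sub>R F x) \<le> norm (y - xs)"
      using norm_triangle_ineq2[of b "\<gamma> *\<^sub>R F x"] by (simp add: b_def y_def algebra_simps)
    ultimately show ?thesis by (simp add: algebra_simps)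
  qed
  then have "(1 - \<gamma> * L)\<^sup>2 * (norm b)\<^sup>2 \<le> (norm (y - xs))\<^sup>2"
    using \<open>\<gamma> * L \<le> 1\<close> by (simp add: power_mult_distrib[symmetric] power_mono)
  then have "m * ((1 - \<gamma> * L)\<^sup>2 * (norm b)\<^sup>2) - l \<le> inner (F y) (y - xs)"
    using mono mult_left_mono[OF _ \<open>0 \<le> m\<close>] unfolding quasi_strongly_monotone_def
    by (meson diff_right_mono order_trans)
  moreover have "inner b (F y) = inner (F y) (y - xs) + \<gamma> * inner (F y) (F x)"
    by (simp add: b_split inner_add_left inner_add_right inner_commute)
  ultimately have "m * ((1 - \<gamma> * L)\<^sup>2 * (norm b)\<^sup>2) - l + \<gamma> * ((norm (F y))\<^sup>2 / 2) \<le> inner b (F y)"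
    by linarith
  then have "2 * (\<alpha> * \<gamma>) * (m * ((1 - \<gamma> * L)\<^sup>2 * (norm b)\<^sup>2) - l + \<gamma> * ((norm (F y))\<^sup>2 / 2))
      \<le> 2 * (\<alpha> * \<gamma>) * inner b (F y)"
    using \<open>0 < \<alpha>\<close> \<open>0 < \<gamma>\<close> by (intro mult_left_mono) auto
  moreover have "(\<alpha> * \<gamma>)\<^sup>2 * (norm (F y))\<^sup>2 \<le> \<alpha> * \<gamma> * \<gamma> * (norm (F y))\<^sup>2"
    using \<open>0 < \<alpha>\<close> \<open>\<alpha> \<le> 1\<close> \<open>0 < \<gamma>\<close>
    by (intro mult_right_mono) (simp_all add: power2_eq_square mult_left_le_one_le)
  ultimately have "(norm b)\<^sup>2 - 2 * (\<alpha> * \<gamma>) * inner b (F y) + (\<alpha> * \<gamma>)\<^sup>2 * (norm (F y))\<^sup>2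
      \<le> (1 - 2 * \<alpha> * \<gamma> * m * (1 - \<gamma> * L)\<^sup>2) * (norm b)\<^sup>2 + 2 * \<alpha> * \<gamma> * l"
    by (simp add: algebra_simps)
  then show ?thesis by (simp add: norm_diff_scaleR_power2 b_def y_def)
qed

lemma extragradient_noisy_norm_power2_le:
  fixes F :: "'a::real_inner \<Rightarrow> 'a"
  assumes mono: "quasi_strongly_monotone F xs m l" and lip: "L-lipschitz_on UNIV F"
    and zero: "F xs = 0"
    and "0 \<le> m" "0 < \<gamma>" "\<gamma> * L \<le> 1" "0 < \<alpha>" "\<alpha> \<le> 1" "0 < \<delta>"
  shows "(norm (x - xs - (\<alpha> * \<gamma>) *\<^sub>R F (x - \<gamma> *\<^sub>R (F x + u))))\<^sup>2
           \<le> (1 + \<delta>) * ((1 - 2 * \<alpha> * \<gamma> * m * (1 - \<gamma> * L)\<^sup>2) * (norm (x - xs))\<^sup>2 + 2 * \<alpha> * \<gamma> * l)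
             + (1 + 1 / \<delta>) * (\<alpha> * \<gamma>\<^sup>2 * L)\<^sup>2 * (norm u)\<^sup>2"
proof -
  define v w where "v = x - xs - (\<alpha> * \<gamma>) *\<^sub>R F (x - \<gamma> *\<^sub>R F x)"
    and "w = (\<alpha> * \<gamma>) *\<^sub>R (F (x - \<gamma> *\<^sub>R F x) - F (x - \<gamma> *\<^sub>R (F x + u)))"
  have "norm (F (x - \<gamma> *\<^sub>R F x) - F (x - \<gamma> *\<^sub>R (F x + u))) \<le> L * norm (\<gamma> *\<^sub>R u)"
    using lipschitz_onD[OF lip, of "x - \<gamma> *\<^sub>R F x" "x - \<gamma> *\<^sub>R (F x + u)"]
    by (simp add: dist_norm scaleR_right_distrib)
  then have "norm w \<le> \<alpha> * \<gamma> * (L * norm (\<gamma> *\<^sub>R u))"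
    using \<open>0 < \<alpha>\<close> \<open>0 < \<gamma>\<close> by (simp add: w_def mult_left_mono)
  also have "\<dots> = \<alpha> * \<gamma>\<^sup>2 * L * norm u"
    using \<open>0 < \<gamma>\<close> by (simp add: power2_eq_square)
  finally have "(norm w)\<^sup>2 \<le> (\<alpha> * \<gamma>\<^sup>2 * L * norm u)\<^sup>2"
    by (simp add: power_mono)
  then have "(norm w)\<^sup>2 \<le> (\<alpha> * \<gamma>\<^sup>2 * L)\<^sup>2 * (norm u)\<^sup>2"
    by (simp add: power_mult_distrib)
  then have "(1 + 1 / \<delta>) * (norm w)\<^sup>2 \<le> (1 + 1 / \<delta>) * (\<alpha> * \<gamma>\<^sup>2 * L)\<^sup>2 * (norm u)\<^sup>2"
    using \<open>0 < \<delta>\<close> by (simp add: mult.assoc mult_left_mono)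
  moreover have "(norm v)\<^sup>2
      \<le> (1 - 2 * \<alpha> * \<gamma> * m * (1 - \<gamma> * L)\<^sup>2) * (norm (x - xs))\<^sup>2 + 2 * \<alpha> * \<gamma> * l"
    unfolding v_def using assms by (intro extragradient_norm_power2_le) auto
  then have "(1 + \<delta>) * (norm v)\<^sup>2
      \<le> (1 + \<delta>) * ((1 - 2 * \<alpha> * \<gamma> * m * (1 - \<gamma> * L)\<^sup>2) * (norm (x - xs))\<^sup>2 + 2 * \<alpha> * \<gamma> * l)"
    using \<open>0 < \<delta>\<close> by (simp add: mult_left_mono)
  moreover have "x - xs - (\<alpha> * \<gamma>) *\<^sub>R F (x - \<gamma> *\<^sub>R (F x + u)) = v + w"
    by (simp add: v_def w_def algebra_simps)
  ultimately show ?thesis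
    using norm_add_power2_le[OF \<open>0 < \<delta>\<close>, of v w] by auto
qed

section \<open>Lyapunov drift of SGDA and SEG\<close>

lemma prob_space_finite_measure_subalgebra:
  assumes "prob_space M" and "subalgebra M G"
  shows "finite_measure_subalgebra M G"
  using assms by (simp add: finite_measure_subalgebra_def finite_measure_subalgebra_axioms_def
      prob_space.finite_measure)

lemma borel_measurable_lyapV [measurable]:
  fixes f :: "'w \<Rightarrow> 'a::euclidean_space"
  assumes [measurable]: "f \<in> borel_measurable M"
  shows "(\<lambda>\<omega>. lyapV (f \<omega>) y) \<in> borel_measurable M"
  unfolding lyapV_def by measurable

lemma sgda_step_cond_exp_lyapV_le:
  fixes F :: "'a::euclidean_space \<Rightarrow> 'a"
  assumes "finite_measure_subalgebra M \<G>" and V: "centred_noise M \<G> V \<sigma>"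
    and [measurable]: "Y \<in> borel_measurable \<G>" "Z \<in> borel_measurable M"
    and step: "\<And>\<omega>. Z \<omega> = Y \<omega> - \<gamma> *\<^sub>R (F (Y \<omega>) + V \<omega>)"
    and mono: "quasi_strongly_monotone F xs m l"
    and growth: "\<And>x. norm (F x) \<le> A + B * norm (x - xs)"
    and "0 \<le> A" "0 \<le> B" "0 < \<gamma>"
  shows "AE \<omega> in M. nn_cond_exp M \<G> (\<lambda>\<omega>. ennreal (lyapV (Z \<omega>) xs)) \<omega>
           \<le> ennreal ((1 - 2 * \<gamma> * m + 25/16 * \<gamma>\<^sup>2 * B\<^sup>2) * (norm (Y \<omega> - xs))\<^sup>2
                      + 2 * \<gamma> * l + 25/4 * \<gamma>\<^sup>2 * A\<^sup>2 + 1 + 5 * \<gamma>\<^sup>2 * \<sigma>\<^sup>2)"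
proof (rule finite_measure_subalgebra.nn_cond_exp_quadratic_noise_le[OF assms(1) V,
      where P = "\<lambda>\<omega>. (1 - 2 * \<gamma> * m + 25/16 * \<gamma>\<^sup>2 * B\<^sup>2) * (norm (Y \<omega> - xs))\<^sup>2
                      + 2 * \<gamma> * l + 25/4 * \<gamma>\<^sup>2 * A\<^sup>2 + 1"
        and D = "\<lambda>\<omega>. (- 2 * \<gamma>) *\<^sub>R (Y \<omega> - xs)" and K = "5 * \<gamma>\<^sup>2"])
  fix \<omega>
  have "(norm (Z \<omega> - xs))\<^sup>2
      \<le> (1 - 2 * \<gamma> * m + 25/16 * \<gamma>\<^sup>2 * B\<^sup>2) * (norm (Y \<omega> - xs))\<^sup>2 + 2 * \<gamma> * l + 25/4 * \<gamma>\<^sup>2 * A\<^sup>2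
        - 2 * \<gamma> * inner (Y \<omega> - xs) (V \<omega>) + 5 * \<gamma>\<^sup>2 * (norm (V \<omega>))\<^sup>2"
    using sgda_step_norm_power2_le[of m "Y \<omega> - xs" l "F (Y \<omega>)" A B \<gamma> "V \<omega>"] assms
    by (simp add: step quasi_strongly_monotone_def algebra_simps)
  then show "lyapV (Z \<omega>) xs
      \<le> (1 - 2 * \<gamma> * m + 25/16 * \<gamma>\<^sup>2 * B\<^sup>2) * (norm (Y \<omega> - xs))\<^sup>2 + 2 * \<gamma> * l + 25/4 * \<gamma>\<^sup>2 * A\<^sup>2 + 1
        + ((- 2 * \<gamma>) *\<^sub>R (Y \<omega> - xs)) \<bullet> V \<omega> + 5 * \<gamma>\<^sup>2 * (norm (V \<omega>))\<^sup>2"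
    by (simp add: lyapV_def)
qed (auto simp: lyapV_def)

lemma seg_step_cond_exp_lyapV_le:
  fixes F :: "'a::euclidean_space \<Rightarrow> 'a"
  assumes \<G>: "finite_measure_subalgebra M \<G>" and \<H>: "finite_measure_subalgebra M \<H>"
    and \<G>_\<H>: "sets \<G> \<subseteq> sets \<H>"
    and V: "centred_noise M \<G> V \<sigma>" and Vh: "centred_noise M \<H> Vh \<sigma>"
    and [measurable]: "Y \<in> borel_measurable \<G>" "Yh \<in> borel_measurable \<H>"
    and half_step: "\<And>\<omega>. Yh \<omega> = Y \<omega> - \<gamma> *\<^sub>R (F (Y \<omega>) + V \<omega>)"
    and step: "\<And>\<omega>. Z \<omega> = Y \<omega> - (\<alpha> * \<gamma>) *\<^sub>R (F (Yh \<omega>) + Vh \<omega>)"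
    and mono: "quasi_strongly_monotone F xs m l" and lip: "L-lipschitz_on UNIV F"
    and zero: "F xs = 0"
    and "0 \<le> m" "0 < \<gamma>" "\<gamma> * L \<le> 1" "0 < \<alpha>" "\<alpha> \<le> 1" "0 < \<delta>"
  shows "AE \<omega> in M. nn_cond_exp M \<G> (\<lambda>\<omega>. ennreal (lyapV (Z \<omega>) xs)) \<omega>
           \<le> ennreal ((1 + \<delta>) * ((1 - 2 * \<alpha> * \<gamma> * m * (1 - \<gamma> * L)\<^sup>2) * (norm (Y \<omega> - xs))\<^sup>2
                                   + 2 * \<alpha> * \<gamma> * l)
                      + 1 + (\<alpha> * \<gamma>)\<^sup>2 * \<sigma>\<^sup>2 + (1 + 1 / \<delta>) * (\<alpha> * \<gamma>\<^sup>2 * L)\<^sup>2 * \<sigma>\<^sup>2)"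
proof -
  interpret \<G>: finite_measure_subalgebra M \<G> by fact
  interpret \<H>: finite_measure_subalgebra M \<H> by fact
  have \<H>_\<G>: "subalgebra \<H> \<G>"
    using \<G>.subalg \<H>.subalg \<G>_\<H> by (auto simp: subalgebra_def)
  have [measurable]: "F \<in> borel_measurable borel"
    using lip by (intro borel_measurable_continuous_onI lipschitz_on_continuous_on)
  have [measurable]: "Y \<in> borel_measurable \<H>" "Y \<in> borel_measurable M" "Yh \<in> borel_measurable M"
    by (auto intro: measurable_from_subalg[OF \<H>_\<G>] measurable_from_subalg[OF \<G>.subalg]
        measurable_from_subalg[OF \<H>.subalg])
  have [measurable]: "Vh \<in> borel_measurable M" using Vh by (simp add: centred_noise_def)
  have "Z = (\<lambda>\<omega>. Y \<omega> - (\<alpha> * \<gamma>) *\<^sub>R (F (Yh \<omega>) + Vh \<omega>))" using step by auto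
  then have [measurable]: "Z \<in> borel_measurable M" by simp
  define B where "B \<omega> = Y \<omega> - xs - (\<alpha> * \<gamma>) *\<^sub>R F (Yh \<omega>)" for \<omega>
  have [measurable]: "B \<in> borel_measurable \<H>" "B \<in> borel_measurable M" unfolding B_def by measurable
  define Q where "Q \<omega> = (norm (B \<omega>))\<^sup>2 + 1 + (\<alpha> * \<gamma>)\<^sup>2 * \<sigma>\<^sup>2" for \<omega>
  have half_step_bound: "AE \<omega> in M. nn_cond_exp M \<H> (\<lambda>\<omega>. ennreal (lyapV (Z \<omega>) xs)) \<omega> \<le> ennreal (Q \<omega>)"
    unfolding Q_def
  proof (rule \<H>.nn_cond_exp_quadratic_noise_le[OF Vh, where P = "\<lambda>\<omega>. (norm (B \<omega>))\<^sup>2 + 1"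
        and D = "\<lambda>\<omega>. (- 2 * (\<alpha> * \<gamma>)) *\<^sub>R B \<omega>" and K = "(\<alpha> * \<gamma>)\<^sup>2"])
    fix \<omega>
    have "Z \<omega> - xs = B \<omega> - (\<alpha> * \<gamma>) *\<^sub>R Vh \<omega>" by (simp add: step B_def algebra_simps)
    then show "lyapV (Z \<omega>) xs
        \<le> (norm (B \<omega>))\<^sup>2 + 1 + ((- 2 * (\<alpha> * \<gamma>)) *\<^sub>R B \<omega>) \<bullet> Vh \<omega> + (\<alpha> * \<gamma>)\<^sup>2 * (norm (Vh \<omega>))\<^sup>2"
      by (simp add: lyapV_def norm_diff_scaleR_power2)
  qed (auto simp: lyapV_def)
  have full_step_bound: "AE \<omega> in M. nn_cond_exp M \<G> (\<lambda>\<omega>. ennreal (Q \<omega>)) \<omega>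
      \<le> ennreal ((1 + \<delta>) * ((1 - 2 * \<alpha> * \<gamma> * m * (1 - \<gamma> * L)\<^sup>2) * (norm (Y \<omega> - xs))\<^sup>2
                              + 2 * \<alpha> * \<gamma> * l)
                 + 1 + (\<alpha> * \<gamma>)\<^sup>2 * \<sigma>\<^sup>2 + (1 + 1 / \<delta>) * (\<alpha> * \<gamma>\<^sup>2 * L)\<^sup>2 * \<sigma>\<^sup>2)"
  proof (rule \<G>.nn_cond_exp_quadratic_noise_le[OF V,
        where P = "\<lambda>\<omega>. (1 + \<delta>) * ((1 - 2 * \<alpha> * \<gamma> * m * (1 - \<gamma> * L)\<^sup>2) * (norm (Y \<omega> - xs))\<^sup>2
                                   + 2 * \<alpha> * \<gamma> * l) + 1 + (\<alpha> * \<gamma>)\<^sup>2 * \<sigma>\<^sup>2"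
          and D = "\<lambda>_. 0" and K = "(1 + 1 / \<delta>) * (\<alpha> * \<gamma>\<^sup>2 * L)\<^sup>2"])
    fix \<omega>
    have "B \<omega> = Y \<omega> - xs - (\<alpha> * \<gamma>) *\<^sub>R F (Y \<omega> - \<gamma> *\<^sub>R (F (Y \<omega>) + V \<omega>))"
      by (simp add: B_def half_step)
    then show "Q \<omega> \<le> (1 + \<delta>) * ((1 - 2 * \<alpha> * \<gamma> * m * (1 - \<gamma> * L)\<^sup>2) * (norm (Y \<omega> - xs))\<^sup>2
                                   + 2 * \<alpha> * \<gamma> * l) + 1 + (\<alpha> * \<gamma>)\<^sup>2 * \<sigma>\<^sup>2
        + 0 \<bullet> V \<omega> + (1 + 1 / \<delta>) * (\<alpha> * \<gamma>\<^sup>2 * L)\<^sup>2 * (norm (V \<omega>))\<^sup>2"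
      using extragradient_noisy_norm_power2_le[OF mono lip zero, of \<gamma> \<alpha> \<delta> "Y \<omega>" "V \<omega>"] assms
      by (simp add: Q_def)
  qed (use \<open>0 < \<delta>\<close> in \<open>auto simp: Q_def\<close>)
  have "AE \<omega> in M. nn_cond_exp M \<G> (\<lambda>\<omega>. ennreal (lyapV (Z \<omega>) xs)) \<omega>
      \<le> nn_cond_exp M \<G> (\<lambda>\<omega>. ennreal (Q \<omega>)) \<omega>"
    by (rule \<G>.nn_cond_exp_le_of_nested_le[OF \<H>.subalg \<H>_\<G> _ _ half_step_bound])
      (auto simp: Q_def)
  then show ?thesis using full_step_bound by eventually_elim (rule order_trans)
qed

definition contractive_drift ::
  "'w measure \<Rightarrow> (nat \<Rightarrow> 'w measure) \<Rightarrow> (nat \<Rightarrow> 'w \<Rightarrow> 'a::real_normed_vector) \<Rightarrow> 'a \<Rightarrow> bool" where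
  "contractive_drift M \<F> X xs \<longleftrightarrow> (\<exists>a b. a < 1 \<and> (\<forall>t. AE \<omega> in M.
     nn_cond_exp M (\<F> t) (\<lambda>\<omega>. ennreal (lyapV (X (Suc t) \<omega>) xs)) \<omega>
       \<le> ennreal (a * (norm (X t \<omega> - xs))\<^sup>2 + b)))"

lemma contractive_drift_lyapV:
  assumes "contractive_drift M \<F> X xs"
  shows "\<exists>c1 c2. 0 < c1 \<and> c1 < 1 \<and> 0 < c2 \<and> (\<forall>t. AE \<omega> in M.
           nn_cond_exp M (\<F> t) (\<lambda>\<omega>. ennreal (lyapV (X (Suc t) \<omega>) xs)) \<omega>
             \<le> ennreal (c1 * lyapV (X t \<omega>) xs + c2))"
proof -
  obtain a b where "a < 1" and drift: "\<And>t. AE \<omega> in M.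
      nn_cond_exp M (\<F> t) (\<lambda>\<omega>. ennreal (lyapV (X (Suc t) \<omega>) xs)) \<omega>
        \<le> ennreal (a * (norm (X t \<omega> - xs))\<^sup>2 + b)"
    using assms unfolding contractive_drift_def by blast
  have affine_le: "a * (norm (x - xs))\<^sup>2 + b \<le> max a (1/2) * lyapV x xs + max b 1" for x
  proof -
    have "a * (norm (x - xs))\<^sup>2 \<le> max a (1/2) * (norm (x - xs))\<^sup>2" by (simp add: mult_right_mono)
    then show ?thesis by (simp add: lyapV_def algebra_simps)
  qed
  have "AE \<omega> in M. nn_cond_exp M (\<F> t) (\<lambda>\<omega>. ennreal (lyapV (X (Suc t) \<omega>) xs)) \<omega>
      \<le> ennreal (max a (1/2) * lyapV (X t \<omega>) xs + max b 1)" for t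
    using drift[of t] by eventually_elim (rule order_trans[OF _ ennreal_leI[OF affine_le]])
  moreover have "0 < max a (1/2)" "max a (1/2) < 1" "0 < max b (1::real)" using \<open>a < 1\<close> by auto
  ultimately show ?thesis by blast
qed

lemma sgda_lyapV_drift:
  fixes F :: "'a::euclidean_space \<Rightarrow> 'a" and X :: "nat \<Rightarrow> 'w \<Rightarrow> 'a"
  assumes prob: "prob_space M" and sub: "\<And>t. subalgebra M (\<F> t)"
    and adapted: "\<And>t. X t \<in> borel_measurable (\<F> t)"
    and noise: "\<And>t. oracle_noise M (\<F> t) (U t) \<sigma>"
    and mono: "quasi_strongly_monotone F xs0 \<mu> lam" and "0 < \<mu>"
    and growth: "\<And>x. norm (F x) \<le> G * (1 + norm x)" and "0 < \<gamma>" "\<gamma> < \<mu> / G\<^sup>2"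
    and step: "\<And>t \<omega>. X (Suc t) \<omega> = X t \<omega> - \<gamma> *\<^sub>R (F (X t \<omega>) + U t \<omega> (X t \<omega>))"
  shows "contractive_drift M \<F> X xs"
proof -
  have "0 \<le> G" using order_trans[OF norm_ge_zero growth[of 0]] by simp
  with \<open>0 < \<gamma>\<close> \<open>\<gamma> < \<mu> / G\<^sup>2\<close> have "\<gamma> * G\<^sup>2 < \<mu>" by (cases "G = 0") (auto simp: field_simps)
  define \<epsilon> where "\<epsilon> = (\<mu> - \<gamma> * G\<^sup>2) / 2"
  have "0 < \<epsilon>" using \<open>\<gamma> * G\<^sup>2 < \<mu>\<close> by (simp add: \<epsilon>_def)
  have growth_xs: "norm (F x) \<le> G * (1 + norm xs) + G * norm (x - xs)" for x
  proof -
    have "G * (1 + norm x) \<le> G * (1 + norm xs + norm (x - xs))"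
      using norm_triangle_sub[of x xs] \<open>0 \<le> G\<close> by (intro mult_left_mono) auto
    then show ?thesis using growth[of x] by (simp add: algebra_simps)
  qed
  obtain l where mono_xs: "quasi_strongly_monotone F xs (\<mu> - \<epsilon>) l"
    using quasi_strongly_monotone_shift[OF mono growth_xs] \<open>0 < \<mu>\<close> \<open>0 \<le> G\<close> \<open>0 < \<epsilon>\<close> by fastforce
  define a where "a = 1 - 2 * \<gamma> * (\<mu> - \<epsilon>) + 25/16 * \<gamma>\<^sup>2 * G\<^sup>2"
  have "a < 1"
  proof -
    have "0 \<le> \<gamma> * G\<^sup>2" using \<open>0 < \<gamma>\<close> by simp
    moreover have "2 * (\<mu> - \<epsilon>) = \<mu> + \<gamma> * G\<^sup>2" by (simp add: \<epsilon>_def field_simps)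
    ultimately have "25/16 * (\<gamma> * G\<^sup>2) < 2 * (\<mu> - \<epsilon>)"
      using \<open>\<gamma> * G\<^sup>2 < \<mu>\<close> by linarith
    then have "\<gamma> * (25/16 * (\<gamma> * G\<^sup>2)) < \<gamma> * (2 * (\<mu> - \<epsilon>))" using \<open>0 < \<gamma>\<close> by simp
    then show ?thesis by (simp add: a_def power2_eq_square algebra_simps)
  qed
  moreover have "AE \<omega> in M. nn_cond_exp M (\<F> t) (\<lambda>\<omega>. ennreal (lyapV (X (Suc t) \<omega>) xs)) \<omega>
      \<le> ennreal (a * (norm (X t \<omega> - xs))\<^sup>2
                 + (2 * \<gamma> * l + 25/4 * \<gamma>\<^sup>2 * (G * (1 + norm xs))\<^sup>2 + 1 + 5 * \<gamma>\<^sup>2 * \<sigma>\<^sup>2))" for t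
    using sgda_step_cond_exp_lyapV_le[OF prob_space_finite_measure_subalgebra[OF prob sub]
        oracle_noise_centred_noise[OF noise adapted] adapted
        measurable_from_subalg[OF sub adapted] step mono_xs growth_xs]
      \<open>0 \<le> G\<close> \<open>0 < \<gamma>\<close>
    by (simp add: a_def add.assoc)
  ultimately show ?thesis unfolding contractive_drift_def by blast
qed

lemma mult_less_one_of_less_inverse:
  fixes \<gamma> a c L :: real
  assumes "0 < \<gamma>" "0 < a" "1 \<le> c" "0 \<le> L" "\<gamma> < 1 / (a + c * L)"
  shows "\<gamma> * L < 1"
proof -
  have "\<gamma> * a + \<gamma> * (c * L) < 1"
    using assms by (simp add: field_simps add_pos_nonneg)
  moreover have "\<gamma> * (1 * L) \<le> \<gamma> * (c * L)"
    using assms by (intro mult_left_mono mult_right_mono) auto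
  moreover have "0 < \<gamma> * a" using assms by simp
  ultimately show ?thesis by simp
qed

lemma inflated_factor_less_one:
  fixes q :: real
  assumes "q < 1"
  shows "(1 + (1 - q) / 2) * q < 1"
proof (cases "q \<le> 0")
  case True
  then show ?thesis using mult_nonneg_nonpos[of "1 + (1 - q) / 2" q] assms by simp
next
  case False
  have "(1 - q) / 2 * q < (1 - q) / 2 * 1"
    using assms by (intro mult_strict_left_mono) auto
  then have "(1 + (1 - q) / 2) * q < q + (1 - q) / 2" by (simp add: distrib_right)
  also have "\<dots> < 1" using assms by (simp add: field_simps)
  finally show ?thesis .
qed

lemma seg_lyapV_drift:
  fixes F :: "'a::euclidean_space \<Rightarrow> 'a" and X Xh :: "nat \<Rightarrow> 'w \<Rightarrow> 'a"
  assumes prob: "prob_space M" and sub: "\<And>t. subalgebra M (\<F> t)"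
    and adapted: "\<And>t. X t \<in> borel_measurable (\<F> t)"
    and noise: "\<And>t. oracle_noise M (\<F> t) (U t) \<sigma>"
    and mono: "quasi_strongly_monotone F xs0 \<mu> lam" and "0 < \<mu>" and zero: "F xs = 0"
    and lip: "L-lipschitz_on UNIV F"
    and "0 < \<gamma>" "\<gamma> < 1 / (2 * \<mu> + sqrt 3 * L)" "0 < \<alpha>" "\<alpha> < 1"
    and half_step: "\<And>t \<omega>. Xh t \<omega> = X t \<omega> - \<gamma> *\<^sub>R (F (X t \<omega>) + U t \<omega> (X t \<omega>))"
    and step: "\<And>t \<omega>. X (Suc t) \<omega> = X t \<omega> - (\<alpha> * \<gamma>) *\<^sub>R (F (Xh t \<omega>) + Uh t \<omega> (Xh t \<omega>))"
    and sub_half: "\<And>t. subalgebra M (\<H> t)" and mono_half: "\<And>t. sets (\<F> t) \<subseteq> sets (\<H> t)"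
    and adapted_half: "\<And>t. Xh t \<in> borel_measurable (\<H> t)"
    and noise_half: "\<And>t. oracle_noise M (\<H> t) (Uh t) \<sigma>"
  shows "contractive_drift M \<F> X xs"
proof -
  have "0 \<le> L" using lip by (simp add: lipschitz_on_def)
  have "\<gamma> * L < 1"
    using \<open>0 < \<gamma>\<close> \<open>0 < \<mu>\<close> \<open>0 \<le> L\<close> \<open>\<gamma> < 1 / (2 * \<mu> + sqrt 3 * L)\<close>
    by (intro mult_less_one_of_less_inverse[of \<gamma> "2 * \<mu>" "sqrt 3"]) auto
  have growth_xs: "norm (F x) \<le> 0 + L * norm (x - xs)" for x
    using lipschitz_onD[OF lip, of x xs] zero by (simp add: dist_norm)
  obtain l where mono_xs: "quasi_strongly_monotone F xs (\<mu> / 2) l"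
    using quasi_strongly_monotone_shift[OF mono growth_xs, of "\<mu> / 2"] \<open>0 < \<mu>\<close> \<open>0 \<le> L\<close> by auto
  define q where "q = 1 - 2 * \<alpha> * \<gamma> * (\<mu> / 2) * (1 - \<gamma> * L)\<^sup>2"
  define \<delta> where "\<delta> = (1 - q) / 2"
  define b where "b = (1 + \<delta>) * (2 * \<alpha> * \<gamma> * l) + 1 + (\<alpha> * \<gamma>)\<^sup>2 * \<sigma>\<^sup>2
    + (1 + 1 / \<delta>) * (\<alpha> * \<gamma>\<^sup>2 * L)\<^sup>2 * \<sigma>\<^sup>2"
  have "q < 1" using \<open>0 < \<alpha>\<close> \<open>0 < \<gamma>\<close> \<open>0 < \<mu>\<close> \<open>\<gamma> * L < 1\<close> by (simp add: q_def)
  then have "0 < \<delta>" and "(1 + \<delta>) * q < 1"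
    using inflated_factor_less_one by (simp_all add: \<delta>_def)
  moreover have "AE \<omega> in M. nn_cond_exp M (\<F> t) (\<lambda>\<omega>. ennreal (lyapV (X (Suc t) \<omega>) xs)) \<omega>
      \<le> ennreal ((1 + \<delta>) * q * (norm (X t \<omega> - xs))\<^sup>2 + b)" for t
  proof -
    have "AE \<omega> in M. nn_cond_exp M (\<F> t) (\<lambda>\<omega>. ennreal (lyapV (X (Suc t) \<omega>) xs)) \<omega>
        \<le> ennreal ((1 + \<delta>) * (q * (norm (X t \<omega> - xs))\<^sup>2 + 2 * \<alpha> * \<gamma> * l)
                   + 1 + (\<alpha> * \<gamma>)\<^sup>2 * \<sigma>\<^sup>2 + (1 + 1 / \<delta>) * (\<alpha> * \<gamma>\<^sup>2 * L)\<^sup>2 * \<sigma>\<^sup>2)"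
      unfolding q_def
      using \<open>0 < \<mu>\<close> \<open>0 < \<gamma>\<close> \<open>\<gamma> * L < 1\<close> \<open>0 < \<alpha>\<close> \<open>\<alpha> < 1\<close> \<open>0 < \<delta>\<close>
      by (intro seg_step_cond_exp_lyapV_le[OF prob_space_finite_measure_subalgebra[OF prob sub]
          prob_space_finite_measure_subalgebra[OF prob sub_half] mono_half
          oracle_noise_centred_noise[OF noise adapted]
          oracle_noise_centred_noise[OF noise_half adapted_half]
          adapted adapted_half half_step step mono_xs lip zero]) auto
    then show ?thesis by (rule eventually_mono) (simp add: b_def algebra_simps)
  qed
  ultimately show ?thesis unfolding contractive_drift_def by blast
qed

theorem corollary1:
  fixes M :: "'w measure"
    and \<F> :: "nat \<Rightarrow> 'w measure"
    and F :: "'a::euclidean_space \<Rightarrow> 'a"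
    and X :: "nat \<Rightarrow> 'w \<Rightarrow> 'a"
    and U :: "nat \<Rightarrow> 'w \<Rightarrow> 'a \<Rightarrow> 'a"
    and \<sigma> R lam \<mu> :: real
    and xs0 :: 'a
  assumes prob: "prob_space M"
    and filt_sub: "\<And>t. subalgebra M (\<F> t)"
    and filt_mono: "\<And>s t. s \<le> t \<Longrightarrow> sets (\<F> s) \<subseteq> sets (\<F> t)"
    and adapted: "\<And>t. X t \<in> borel_measurable (\<F> t)"
    and sigma_pos: "\<sigma> > 0"
    and noise_meas: "\<And>t. (\<lambda>\<omega>. U t \<omega> (X t \<omega>)) \<in> borel_measurable (\<F> (Suc t))"
    and noise_nonmeas: "\<And>t. (\<lambda>\<omega>. U t \<omega> (X t \<omega>)) \<notin> borel_measurable (\<F> t)"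
    and noise: "\<And>t. oracle_noise M (\<F> t) (U t) \<sigma>"
    and xs0_sol: "F xs0 = 0"
    and xs0_R: "norm xs0 \<le> R"
    and lam: "lam \<ge> 0"
    and mu: "\<mu> > 0"
    and var_ineq: "\<And>x. inner (F x) (x - xs0) \<ge> \<mu> * (norm (x - xs0))\<^sup>2 - lam"
    and alg:
      "(\<exists>G \<gamma>::real.
          (\<forall>x. norm (F x) \<le> G * (1 + norm x)) \<and> 0 < \<gamma> \<and> \<gamma> < \<mu> / G\<^sup>2 \<and>
          (\<forall>t \<omega>. X (Suc t) \<omega> = X t \<omega> - \<gamma> *\<^sub>R (F (X t \<omega>) + U t \<omega> (X t \<omega>))))
       \<or>
       (\<exists>(L::real) (\<gamma>::real) (\<alpha>::real) (Uh :: nat \<Rightarrow> 'w \<Rightarrow> 'a \<Rightarrow> 'a)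
          (Xh :: nat \<Rightarrow> 'w \<Rightarrow> 'a) (\<H> :: nat \<Rightarrow> 'w measure).
          L-lipschitz_on UNIV F \<and> 0 < \<gamma> \<and> \<gamma> < 1 / (2 * \<mu> + sqrt 3 * L) \<and>
          0 < \<alpha> \<and> \<alpha> < 1 \<and>
          (\<forall>t \<omega>. Xh t \<omega> = X t \<omega> - \<gamma> *\<^sub>R (F (X t \<omega>) + U t \<omega> (X t \<omega>))) \<and>
          (\<forall>t \<omega>. X (Suc t) \<omega> =
                   X t \<omega> - (\<alpha> * \<gamma>) *\<^sub>R (F (Xh t \<omega>) + Uh t \<omega> (Xh t \<omega>))) \<and>
          (\<forall>t. subalgebra M (\<H> t) \<and> sets (\<F> t) \<subseteq> sets (\<H> t) \<and>
               Xh t \<in> borel_measurable (\<H> t) \<and> oracle_noise M (\<H> t) (Uh t) \<sigma>))"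
  shows "\<forall>xs. F xs = 0 \<longrightarrow>
           (\<exists>c1 c2::real. 0 < c1 \<and> c1 < 1 \<and> 0 < c2 \<and>
              (\<forall>t. AE \<omega> in M.
                 nn_cond_exp M (\<F> t) (\<lambda>\<omega>. ennreal (lyapV (X (Suc t) \<omega>) xs)) \<omega>
                   \<le> ennreal (c1 * lyapV (X t \<omega>) xs + c2)))"
proof (intro allI impI)
  fix xs assume "F xs = 0"
  have mono: "quasi_strongly_monotone F xs0 \<mu> lam"
    using var_ineq by (simp add: quasi_strongly_monotone_def)
  from alg have "contractive_drift M \<F> X xs"
    apply (elim disjE exE conjE)
    subgoal for G \<gamma>
      by (intro sgda_lyapV_drift[OF prob filt_sub adapted noise mono mu]) auto
    subgoal for L \<gamma> \<alpha> Uh Xh \<H>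
      by (intro seg_lyapV_drift[where L = L and \<gamma> = \<gamma> and \<alpha> = \<alpha> and Xh = Xh and Uh = Uh
            and \<H> = \<H>, OF prob filt_sub adapted noise mono mu \<open>F xs = 0\<close>]) simp_all
    done
  then show "\<exists>c1 c2. 0 < c1 \<and> c1 < 1 \<and> 0 < c2 \<and> (\<forall>t. AE \<omega> in M.
      nn_cond_exp M (\<F> t) (\<lambda>\<omega>. ennreal (lyapV (X (Suc t) \<omega>) xs)) \<omega>
        \<le> ennreal (c1 * lyapV (X t \<omega>) xs + c2))"
    by (rule contractive_drift_lyapV)
qed

end
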